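(* Let $n\ge3$, let every qubit carry the Hamiltonian $H_i=|1\rangle\langle1|$, and let $s=[n]$. For $|\mathrm{GHZ}_n\rangle=\frac1{\sqrt2}(|0\rangle^{\otimes n}+|1\rangle^{\otimes n})$ and $|W_n\rangle=\frac1{\sqrt n}\sum_{i=1}^n|0\cdots01_i0\cdots0\rangle$, $$M^{(s)}_E(|\mathrm{GHZ}_n\rangle)=1-\frac{1}{2^{n-1}},\qquad M^{(s)}_E(|W_n\rangle)=1-\frac{1}{2^{n-1}}\binom{n-1}{\lfloor\frac{n-1}{2}\rfloor}.$$ In particular $M^{(s)}_E(|\mathrm{GHZ}_n\rangle)>M^{(s)}_E(|W_n\rangle)$.
   Context: For $X\subseteq[n]$, $H_X=\sum_{i\in X}H_i$ with eigenvalues $0=\epsilon^X_0\le\epsilon^X_1\le\cdots$. For a state $\rho_X$ with eigenvalues $p_0\ge p_1\ge\cdots$ the passive-state energy is $\mathrm{tr}(\rho_X^pH_X)=\sum_jp_j\epsilon^X_j$. For a pure state $|\psi\rangle$ with marginals $\rho_X=\mathrm{tr}_{X^c}|\psi\rangle\langle\psi|$, $\Delta_{X|X^c}(|\psi\rangle)=\mathrm{tr}(\rho_X^pH_X)+\mathrm{tr}(\rho_{X^c}^pH_{X^c})$, set to $0$ for $X=\emptyset$ or $X=[n]$, and $M^{(s)}_E(|\psi\rangle)=2^{-|s|}\sum_{X\subseteq s}\Delta_{X|X^c}(|\psi\rangle)$. $\lfloor\cdot\rfloor$ is the floor function. *)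

theory Defs
  imports Complex_Main "Jordan_Normal_Form.Char_Poly"
    "HOL-Computational_Algebra.Fundamental_Theorem_Algebra"
begin

(* Conventions.
   n qubits, labelled 0..n-1 (so [n] = {0..<n}).
   A computational basis vector of the n-qubit space is indexed by a
   natural number b < 2^n: qubit i is in state |1> iff  bit b i.
   A (pure) state vector is given by its amplitudes  psi :: nat => complex
   (only the values on {0..<2^n} matter).

   For X = {x_0 < ... < x_(m-1)} the local basis of the subsystem X is
   indexed by k < 2^m, qubit x_j being |1> iff bit k j. *)

definition embed :: "nat set \<Rightarrow> nat \<Rightarrow> nat" where
  "embed X k = (\<Sum>j<card X. if bit k j then 2 ^ (sorted_list_of_set X ! j) else 0)"

(* reduced density matrix rho_X = tr_{X^c} |psi><psi| *)
definition marginal :: "nat \<Rightarrow> (nat \<Rightarrow> complex) \<Rightarrow> nat set \<Rightarrow> complex mat" where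
  "marginal n psi X =
     (let Y = {0..<n} - X in
      mat (2 ^ card X) (2 ^ card X)
        (\<lambda>(k, l). \<Sum>c<2 ^ card Y.
            psi (embed X k + embed Y c) * cnj (psi (embed X l + embed Y c))))"

(* H_X = sum_{i in X} H_i with H_i = |1><1| on qubit i, in the local basis of X *)
definition hamX :: "nat set \<Rightarrow> complex mat" where
  "hamX X = mat (2 ^ card X) (2 ^ card X)
      (\<lambda>(k, l). if k = l then of_nat (card {j. j < card X \<and> bit k j}) else 0)"

(* eigenvalues (with algebraic multiplicity) of a Hermitian matrix, as reals *)
definition eigs :: "complex mat \<Rightarrow> real multiset" where
  "eigs A = image_mset Re (proots (char_poly A))"

(* passive-state energy tr(rho^p H) = sum_j p_j eps_j, p decreasing, eps increasing *)
definition passive_energy :: "complex mat \<Rightarrow> complex mat \<Rightarrow> real" where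
  "passive_energy rho H =
     (let p = rev (sorted_list_of_multiset (eigs rho));
          e = sorted_list_of_multiset (eigs H)
      in \<Sum>j<dim_row rho. p ! j * e ! j)"

definition Delta :: "nat \<Rightarrow> (nat \<Rightarrow> complex) \<Rightarrow> nat set \<Rightarrow> real" where
  "Delta n psi X =
     (if X = {} \<or> X = {0..<n} then 0
      else passive_energy (marginal n psi X) (hamX X)
         + passive_energy (marginal n psi ({0..<n} - X)) (hamX ({0..<n} - X)))"

definition ME :: "nat \<Rightarrow> (nat \<Rightarrow> complex) \<Rightarrow> nat set \<Rightarrow> real" where
  "ME n psi s = (\<Sum>X\<in>Pow s. Delta n psi X) / 2 ^ card s"

definition GHZ :: "nat \<Rightarrow> nat \<Rightarrow> complex" where
  "GHZ n b = (if b = 0 \<or> b = 2 ^ n - 1 then complex_of_real (1 / sqrt 2) else 0)"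

definition Wst :: "nat \<Rightarrow> nat \<Rightarrow> complex" where
  "Wst n b = (if \<exists>i<n. b = 2 ^ i then complex_of_real (1 / sqrt (real n)) else 0)"

end

theory Submission
  imports Defs
begin

text \<open>For a nontrivial cut \<open>X | X\<^sup>c\<close> the GHZ marginal on \<open>X\<close> is
  \<open>diag(1/2, 0, \<dots>, 0, 1/2)\<close> and the W marginal is
  \<open>(|X\<^sup>c|/n) |0\<rangle>\<langle>0| + (|X|/n) |W\<^sub>X\<rangle>\<langle>W\<^sub>X|\<close>; each has exactly two nonzero
  eigenvalues. The two lowest levels of \<open>H\<^sub>X\<close> are \<open>0\<close> and \<open>1\<close>, so the passive-state
  energy of such a state is its smaller nonzero eigenvalue. Hence \<open>\<Delta> = 1\<close> for GHZ and
  \<open>\<Delta> = 2 min(|X|, n - |X|)/n\<close> for W. Summing over all \<open>2\<^sup>n\<close> subsets gives the GHZ value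
  at once; for W the absorption identity for binomial coefficients turns
  \<open>\<Sum>\<^sub>k C(n,k) min(k, n-k)\<close> into \<open>n (2\<^sup>n\<^sup>-\<^sup>1 - C(n-1, \<lfloor>(n-1)/2\<rfloor>))\<close>, and the
  comparison reduces to \<open>C(n-1, \<lfloor>(n-1)/2\<rfloor>) > 1\<close> for \<open>n \<ge> 3\<close>.\<close>

section \<open>Spectra of triangular and sheared matrices\<close>

lemma proots_prod_linear_factors: "proots (\<Prod>a\<leftarrow>xs. [:- a, 1:]) = mset (xs :: 'a::idom list)"
proof (induction xs)
  case (Cons a xs)
  have "(\<Prod>a\<leftarrow>xs. [:- a, 1:]) \<noteq> 0" by auto
  then have "proots ([:- a, 1:] * (\<Prod>a\<leftarrow>xs. [:- a, 1:])) = proots [:- a, 1:] + mset xs"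
    using Cons.IH by (subst proots_mult) auto
  then show ?case by simp
qed simp

lemma eigs_upper_triangular:
  assumes "A \<in> carrier_mat n n" and "upper_triangular A"
  shows "eigs A = mset (map (\<lambda>i. Re (A $$ (i, i))) [0..<n])"
  using assms(1)
  unfolding eigs_def char_poly_upper_triangular[OF assms] proots_prod_linear_factors diag_mat_def
  by (simp add: multiset.map_comp comp_def)

definition shear_mat :: "nat \<Rightarrow> nat set \<Rightarrow> nat \<Rightarrow> 'a::comm_ring_1 \<Rightarrow> 'a mat" where
  "shear_mat n S p c = mat n n (\<lambda>(i, k). (if i = k then 1 else 0) + (if k = p \<and> i \<in> S then c else 0))"

lemma shear_mat_carrier [simp]: "shear_mat n S p c \<in> carrier_mat n n"
  by (simp add: shear_mat_def)

lemma shear_mat_mult: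
  fixes M :: "'a::comm_ring_1 mat"
  assumes M: "M \<in> carrier_mat n n" and p: "p < n"
  shows "shear_mat n S p c * M = mat n n (\<lambda>(i, j). M $$ (i, j) + (if i \<in> S then c * M $$ (p, j) else 0))"
proof (rule eq_matI)
  fix i j assume "i < dim_row (mat n n (\<lambda>(i, j). M $$ (i, j) + (if i \<in> S then c * M $$ (p, j) else 0)))"
    and "j < dim_col (mat n n (\<lambda>(i, j). M $$ (i, j) + (if i \<in> S then c * M $$ (p, j) else 0)))"
  then have i: "i < n" and j: "j < n" by auto
  have "(shear_mat n S p c * M) $$ (i, j)
      = (\<Sum>k = 0..<n. (if i = k then M $$ (k, j) else 0) + (if p = k then (if i \<in> S then c * M $$ (k, j) else 0) else 0))"
    using M i j unfolding shear_mat_def by (auto simp: scalar_prod_def algebra_simps intro!: sum.cong)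
  also have "\<dots> = M $$ (i, j) + (if i \<in> S then c * M $$ (p, j) else 0)"
    using i p by (simp add: sum.distrib sum.delta')
  finally show "(shear_mat n S p c * M) $$ (i, j)
      = mat n n (\<lambda>(i, j). M $$ (i, j) + (if i \<in> S then c * M $$ (p, j) else 0)) $$ (i, j)"
    using i j by simp
qed (use M in \<open>auto simp: shear_mat_def\<close>)

lemma mult_shear_mat:
  fixes M :: "'a::comm_ring_1 mat"
  assumes M: "M \<in> carrier_mat n n" and S: "S \<subseteq> {0..<n}"
  shows "M * shear_mat n S p c = mat n n (\<lambda>(i, j). M $$ (i, j) + (if j = p then c * (\<Sum>k\<in>S. M $$ (i, k)) else 0))"
proof (rule eq_matI)
  fix i j assume "i < dim_row (mat n n (\<lambda>(i, j). M $$ (i, j) + (if j = p then c * (\<Sum>k\<in>S. M $$ (i, k)) else 0)))"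
    and "j < dim_col (mat n n (\<lambda>(i, j). M $$ (i, j) + (if j = p then c * (\<Sum>k\<in>S. M $$ (i, k)) else 0)))"
  then have i: "i < n" and j: "j < n" by auto
  have "(M * shear_mat n S p c) $$ (i, j)
      = (\<Sum>k = 0..<n. (if j = k then M $$ (i, k) else 0) + (if j = p \<and> k \<in> S then c * M $$ (i, k) else 0))"
    using M i j unfolding shear_mat_def by (auto simp: scalar_prod_def algebra_simps intro!: sum.cong)
  also have "\<dots> = M $$ (i, j) + (if j = p then c * (\<Sum>k\<in>S. M $$ (i, k)) else 0)"
    using j S by (simp add: sum.distrib sum.delta' sum.If_cases Int_absorb1 sum_distrib_left)
  finally show "(M * shear_mat n S p c) $$ (i, j)
      = mat n n (\<lambda>(i, j). M $$ (i, j) + (if j = p then c * (\<Sum>k\<in>S. M $$ (i, k)) else 0)) $$ (i, j)"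
    using i j by simp
qed (use M in \<open>auto simp: shear_mat_def\<close>)

lemma shear_mat_inverse:
  assumes "p < n" and "p \<notin> S"
  shows "shear_mat n S p c * shear_mat n S p (- c) = 1\<^sub>m n"
  using assms by (subst shear_mat_mult) (auto simp: shear_mat_def)

lemma similar_matI_intertwining:
  assumes "{A, B, P, Q} \<subseteq> carrier_mat n n" "P * Q = 1\<^sub>m n" "Q * P = 1\<^sub>m n" "A * P = P * B"
  shows "similar_mat A B"
proof (rule similar_matI[OF assms(1-3)])
  have A: "A \<in> carrier_mat n n" using assms(1) by simp
  have "A = A * 1\<^sub>m n" using A by simp
  also have "\<dots> = A * (P * Q)" using assms(2) by simp
  also have "\<dots> = P * B * Q" using assms(1,4) A by (simp add: assoc_mult_mat[of A n n P n Q n, symmetric])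
  finally show "A = P * B * Q" .
qed

definition corner_block_mat :: "nat \<Rightarrow> complex \<Rightarrow> nat set \<Rightarrow> complex \<Rightarrow> complex mat" where
  "corner_block_mat N a S b =
     mat N N (\<lambda>(k, l). (if k = 0 \<and> l = 0 then a else 0) + (if k \<in> S \<and> l \<in> S then b else 0))"

text \<open>The shear that adds row 1 to the rows in \<open>S - {1}\<close> conjugates
  \<open>a |0\<rangle>\<langle>0| + b |1\<^sub>S\<rangle>\<langle>1\<^sub>S|\<close> into an upper triangular matrix.\<close>

lemma corner_block_mat_shear:
  assumes S: "S \<subseteq> {1..<N}" "1 \<in> S"
  defines "P \<equiv> shear_mat N (S - {1}) 1 1"
  shows "corner_block_mat N a S b * P = P * mat N N (\<lambda>(i, j). (if i = 0 \<and> j = 0 then a else 0)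
      + (if i = 1 \<and> j \<in> S then b else 0) + (if i = 1 \<and> j = 1 then of_nat (card S - 1) * b else 0))"
    (is "?A * P = P * ?B")
proof -
  define S' where "S' = S - {1}"
  have N1: "1 < N" and S'N: "S' \<subseteq> {0..<N}" and "1 \<notin> S'" and "0 \<notin> S"
    using S by (auto simp: S'_def)
  have "card S' = card S - 1" using S(2) by (simp add: S'_def)
  have row_sum: "(\<Sum>k\<in>S'. ?A $$ (i, k)) = of_nat (card S') * (if i \<in> S then b else 0)" if "i < N" for i
  proof -
    have "(\<Sum>k\<in>S'. ?A $$ (i, k)) = (\<Sum>k\<in>S'. if i \<in> S then b else 0)"
      using that S'N \<open>0 \<notin> S\<close> by (intro sum.cong) (auto simp: corner_block_mat_def S'_def)
    then show ?thesis by simp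
  qed
  have A: "?A \<in> carrier_mat N N" and B: "?B \<in> carrier_mat N N" by (simp_all add: corner_block_mat_def)
  show ?thesis
    unfolding P_def S'_def[symmetric] mult_shear_mat[OF A S'N] shear_mat_mult[OF B N1]
  proof (intro eq_matI)
    fix i j assume "i < dim_row (mat N N (\<lambda>(i, j). ?B $$ (i, j) + (if i \<in> S' then 1 * ?B $$ (1, j) else 0)))"
      "j < dim_col (mat N N (\<lambda>(i, j). ?B $$ (i, j) + (if i \<in> S' then 1 * ?B $$ (1, j) else 0)))"
    then have i: "i < N" and j: "j < N" by auto
    have "i \<in> S \<longleftrightarrow> i = 1 \<or> i \<in> S'" using S(2) by (auto simp: S'_def)
    then show "mat N N (\<lambda>(i, j). ?A $$ (i, j) + (if j = 1 then 1 * (\<Sum>k\<in>S'. ?A $$ (i, k)) else 0)) $$ (i, j)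
        = mat N N (\<lambda>(i, j). ?B $$ (i, j) + (if i \<in> S' then 1 * ?B $$ (1, j) else 0)) $$ (i, j)"
      unfolding index_mat(1)[OF i j] split row_sum[OF i]
      using i j N1 \<open>0 \<notin> S\<close> \<open>1 \<notin> S'\<close> S(2) \<open>card S' = card S - 1\<close>
      by (cases "i = 1"; cases "i \<in> S'"; cases "j = 1"; cases "j \<in> S"; cases "i = 0"; cases "j = 0")
        (auto simp: corner_block_mat_def algebra_simps)
  qed (auto simp: corner_block_mat_def)
qed

lemma eigs_corner_block_mat:
  assumes S: "S \<subseteq> {1..<N}" "1 \<in> S"
  shows "eigs (corner_block_mat N a S b)
     = mset (map (\<lambda>i. Re (if i = 0 then a else if i = 1 then of_nat (card S) * b else 0)) [0..<N])"
proof -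
  define B where "B = mat N N (\<lambda>(i, j). (if i = 0 \<and> j = 0 then a else 0)
      + (if i = 1 \<and> j \<in> S then b else 0) + (if i = 1 \<and> j = 1 then of_nat (card S - 1) * b else 0))"
  define P where "P = shear_mat N (S - {1}) 1 (1::complex)"
  define Q where "Q = shear_mat N (S - {1}) 1 (-1::complex)"
  have N1: "1 < N" and "1 \<notin> S - {1}" and "0 \<notin> S" using S by auto
  have "{corner_block_mat N a S b, B, P, Q} \<subseteq> carrier_mat N N"
    by (simp add: corner_block_mat_def B_def P_def Q_def)
  moreover have "P * Q = 1\<^sub>m N" and "Q * P = 1\<^sub>m N"
    using shear_mat_inverse[OF N1 \<open>1 \<notin> S - {1}\<close>, of 1]
      shear_mat_inverse[OF N1 \<open>1 \<notin> S - {1}\<close>, of "-1"]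
    by (simp_all add: P_def Q_def)
  moreover have "corner_block_mat N a S b * P = P * B"
    using corner_block_mat_shear[OF S] by (simp add: B_def P_def)
  ultimately have "similar_mat (corner_block_mat N a S b) B"
    by (rule similar_matI_intertwining)
  then have "eigs (corner_block_mat N a S b) = eigs B" unfolding eigs_def by (simp add: char_poly_similar)
  also have "\<dots> = mset (map (\<lambda>i. Re (B $$ (i, i))) [0..<N])"
    using S by (intro eigs_upper_triangular) (auto simp: B_def upper_triangular_def)
  also have "\<dots> = mset (map (\<lambda>i. Re (if i = 0 then a else if i = 1 then of_nat (card S) * b else 0)) [0..<N])"
  proof -
    have "card S \<ge> 1" using S finite_subset[OF S(1)] by (auto simp: Suc_le_eq card_gt_0_iff)
    then show ?thesis
      using S(2) \<open>0 \<notin> S\<close> by (intro arg_cong[where f = mset] map_cong) (auto simp: B_def algebra_simps of_nat_diff)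
  qed
  finally show ?thesis .
qed

section \<open>Passive-state energy against \<open>H\<^sub>X\<close>\<close>

lemma eigs_hamX:
  "eigs (hamX X) = mset (map (\<lambda>k. real (card {j. j < card X \<and> bit k j})) [0..<2 ^ card X])"
proof -
  have "hamX X \<in> carrier_mat (2 ^ card X) (2 ^ card X)" and "upper_triangular (hamX X)"
    by (auto simp: hamX_def upper_triangular_def)
  then show ?thesis
    unfolding eigs_upper_triangular[OF \<open>hamX X \<in> _\<close> \<open>upper_triangular _\<close>]
    by (intro arg_cong[where f = mset] map_cong) (auto simp: hamX_def)
qed

lemma bit_imp_less_exp: "bit (k::nat) j \<Longrightarrow> k < 2 ^ m \<Longrightarrow> j < m"
  by (metis bit_take_bit_iff take_bit_nat_eq_self_iff)

lemma sorted_eigs_hamX: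
  assumes "card X \<ge> 1"
  obtains rest where "sorted_list_of_multiset (eigs (hamX X)) = 0 # 1 # rest"
proof -
  define m where "m = card X"
  define f where "f k = real (card {j. j < m \<and> bit k j})" for k :: nat
  have "(2::nat) ^ 1 \<le> 2 ^ m" using assms by (intro power_increasing) (auto simp: m_def)
  then have "map f [0..<2 ^ m] = f 0 # f 1 # map f [2..<2 ^ m]"
    by (simp add: upt_conv_Cons numeral_2_eq_2)
  moreover have "f 0 = 0" by (simp add: f_def)
  moreover have "{j. j < m \<and> bit (1::nat) j} = {0}" using assms by (auto simp: m_def bit_Suc_0_iff)
  then have "f 1 = 1" by (simp add: f_def)
  moreover have "f k \<ge> 1" if "k \<in> set [2..<2 ^ m]" for k
  proof -
    have "k \<noteq> 0" using that by simp
    then obtain j where "bit k j" using bit_eq_iff[of k 0] by auto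
    then have "j \<in> {j. j < m \<and> bit k j}" using that bit_imp_less_exp by auto
    then have "card {j. j < m \<and> bit k j} > 0" by (subst card_gt_0_iff) auto
    then show ?thesis by (simp add: f_def)
  qed
  then have "\<forall>x\<in>set (sort (map f [2..<2 ^ m])). 1 \<le> x" by auto
  ultimately have "sort (map f [0..<2 ^ m]) = 0 # 1 # sort (map f [2..<2 ^ m])"
    by (simp add: insort_is_Cons)
  moreover have "sorted_list_of_multiset (eigs (hamX X)) = sort (map f [0..<2 ^ m])"
    unfolding eigs_hamX f_def m_def by (simp only: sorted_list_of_multiset_mset)
  ultimately show ?thesis using that by simp
qed

text \<open>A state with only two nonzero eigenvalues puts the larger one on the ground level \<open>0\<close>
  and the smaller one on the first level \<open>1\<close> of \<open>H\<^sub>X\<close>.\<close>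

lemma passive_energy_two_eigenvalues:
  assumes eigs: "eigs rho = add_mset x (add_mset y (replicate_mset (dim_row rho - 2) 0))"
    and dim: "dim_row rho = 2 ^ card X" and X: "card X \<ge> 1" and "x \<ge> 0" "y \<ge> 0"
  shows "passive_energy rho (hamX X) = min x y"
proof -
  define N where "N = dim_row rho"
  have "(2::nat) ^ 1 \<le> 2 ^ card X" using X by (intro power_increasing) auto
  then have "N \<ge> 2" using dim by (simp add: N_def)
  have "eigs rho = mset (replicate (N - 2) 0 @ [min x y, max x y])"
    unfolding eigs N_def by (auto simp: min_def max_def)
  moreover have "sorted (replicate (N - 2) 0 @ [min x y, max x y])"
    using \<open>x \<ge> 0\<close> \<open>y \<ge> 0\<close> by (auto simp: sorted_append)
  ultimately have "sorted_list_of_multiset (eigs rho) = replicate (N - 2) 0 @ [min x y, max x y]"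
    by (simp only: sorted_list_of_multiset_mset sorted_sort_id)
  then have "rev (sorted_list_of_multiset (eigs rho)) = [max x y, min x y] @ replicate (N - 2) 0"
    by simp
  moreover obtain rest where "sorted_list_of_multiset (eigs (hamX X)) = 0 # 1 # rest"
    using sorted_eigs_hamX[OF X] by blast
  ultimately have "passive_energy rho (hamX X)
      = (\<Sum>j<N. ([max x y, min x y] @ replicate (N - 2) 0) ! j * ((0::real) # 1 # rest) ! j)"
    unfolding passive_energy_def Let_def N_def by simp
  also have "\<dots> = (\<Sum>j\<in>{0, 1}. ([max x y, min x y] @ replicate (N - 2) 0) ! j * ((0::real) # 1 # rest) ! j)"
    using \<open>N \<ge> 2\<close> by (intro sum.mono_neutral_right) (auto simp: nth_append)
  also have "\<dots> = min x y" by simp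
  finally show ?thesis .
qed

lemma mset_map_upt_two_nonzero:
  assumes "i < N" "i' < N" "i \<noteq> i'"
    and "\<And>k. k < N \<Longrightarrow> k \<noteq> i \<Longrightarrow> k \<noteq> i' \<Longrightarrow> d k = (0::real)"
  shows "mset (map d [0..<N]) = add_mset (d i) (add_mset (d i') (replicate_mset (N - 2) 0))"
proof -
  define R where "R = {0..<N} - {i, i'}"
  have "{0..<N} = insert i (insert i' R)" using assms(1-3) by (auto simp: R_def)
  moreover have "mset_set (insert i (insert i' R)) = add_mset i (add_mset i' (mset_set R))"
    using assms(3) by (simp add: R_def)
  ultimately have "mset_set {0..<N} = add_mset i (add_mset i' (mset_set R))" by simp
  moreover have "image_mset d (mset_set R) = replicate_mset (N - 2) 0"
  proof -
    have "image_mset d (mset_set R) = image_mset (\<lambda>_. 0) (mset_set R)"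
      using assms(4) by (intro image_mset_cong) (auto simp: R_def)
    moreover have "card R = N - 2" using assms(1-3) by (simp add: R_def card_Diff_subset)
    ultimately show ?thesis by (simp add: image_mset_const_eq)
  qed
  ultimately show ?thesis by simp
qed

section \<open>Local basis indices and excited qubits\<close>

lemma bit_sum_exp_iff: "finite T \<Longrightarrow> bit (\<Sum>i\<in>T. (2::nat) ^ i) p \<longleftrightarrow> p \<in> T"
proof (induction T arbitrary: p rule: finite_induct)
  case (insert x F)
  then have "bit (2 ^ x + (\<Sum>i\<in>F. (2::nat) ^ i)) p
      \<longleftrightarrow> bit ((2::nat) ^ x) p \<or> bit (\<Sum>i\<in>F. (2::nat) ^ i) p"
    by (intro bit_disjunctive_add_iff) (auto simp: bit_exp_iff)
  with insert show ?case by (auto simp: bit_exp_iff)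
qed simp

lemma nat_eq_iff_bits_eq: "(a::nat) = b \<longleftrightarrow> {p. bit a p} = {p. bit b p}"
  by (auto simp: bit_eq_iff)

lemma bits_mask: "{p. bit (2 ^ n - 1 :: nat) p} = {0..<n}"
  unfolding mask_eq_exp_minus_1[symmetric] by (auto simp: bit_mask_iff)

lemma bits_exp: "{p. bit (2 ^ i :: nat) p} = {i}"
  by (auto simp: bit_exp_iff)

definition excited :: "nat set \<Rightarrow> nat \<Rightarrow> nat set" where
  "excited X k = (\<lambda>j. sorted_list_of_set X ! j) ` {j. j < card X \<and> bit k j}"

lemma inj_on_nth_sorted_list_of_set:
  "finite X \<Longrightarrow> inj_on (\<lambda>j. sorted_list_of_set X ! j) {..<card X}"
  by (intro inj_on_nth) auto

lemma image_nth_sorted_list_of_set: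
  "finite X \<Longrightarrow> (\<lambda>j. sorted_list_of_set X ! j) ` {..<card X} = X"
  using nth_image[of "card X" "sorted_list_of_set X"] by (simp add: atLeast0LessThan)

lemma excited_subset: "finite X \<Longrightarrow> excited X k \<subseteq> X"
  using image_nth_sorted_list_of_set[of X] by (auto simp: excited_def)

lemma embed_eq_sum_excited: "finite X \<Longrightarrow> embed X k = (\<Sum>i\<in>excited X k. 2 ^ i)"
proof -
  assume "finite X"
  have "embed X k = (\<Sum>j\<in>{j. j < card X \<and> bit k j}. 2 ^ (sorted_list_of_set X ! j))"
    unfolding embed_def by (simp add: sum.If_cases lessThan_def Collect_conj_eq Int_commute)
  also have "\<dots> = (\<Sum>i\<in>excited X k. 2 ^ i)"
    unfolding excited_def using inj_on_nth_sorted_list_of_set[OF \<open>finite X\<close>]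
    by (intro sum.reindex[symmetric, unfolded comp_def]) (auto intro: inj_on_subset)
  finally show ?thesis .
qed

lemma bit_embed_add_embed_iff:
  assumes "finite X" "finite Y" "X \<inter> Y = {}"
  shows "bit (embed X k + embed Y c) p \<longleftrightarrow> p \<in> excited X k \<union> excited Y c"
proof -
  have bit_embed: "bit (embed Z l) q \<longleftrightarrow> q \<in> excited Z l" if "finite Z" for Z l q
    using that by (simp add: embed_eq_sum_excited bit_sum_exp_iff excited_def)
  have "bit (embed X k + embed Y c) p \<longleftrightarrow> bit (embed X k) p \<or> bit (embed Y c) p"
    using assms excited_subset[of X k] excited_subset[of Y c]
    by (intro bit_disjunctive_add_iff) (auto simp: bit_embed)
  then show ?thesis using assms by (simp add: bit_embed)
qed

lemma excited_inj:
  assumes "finite X" "k < 2 ^ card X" "k' < 2 ^ card X" "excited X k = excited X k'"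
  shows "k = k'"
proof -
  have "{j. j < card X \<and> bit k j} = {j. j < card X \<and> bit k' j}"
    using assms(4) unfolding excited_def
    by (subst (asm) inj_on_image_eq_iff[OF inj_on_nth_sorted_list_of_set[OF assms(1)]]) auto
  then have "bit k p \<longleftrightarrow> bit k' p" for p
    using assms(2,3) bit_imp_less_exp by blast
  then show ?thesis by (simp add: bit_eq_iff)
qed

lemma excited_0 [simp]: "excited X 0 = {}"
  by (simp add: excited_def)

lemma excited_mask: "finite X \<Longrightarrow> excited X (2 ^ card X - 1) = X"
proof -
  assume "finite X"
  have "{j. j < card X \<and> bit (mask (card X) :: nat) j} = {..<card X}"
    by (auto simp: bit_mask_iff)
  then show ?thesis
    using image_nth_sorted_list_of_set[OF \<open>finite X\<close>] by (simp add: excited_def mask_eq_exp_minus_1)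
qed

lemma excited_exp: "j < card X \<Longrightarrow> excited X (2 ^ j) = {sorted_list_of_set X ! j}"
proof -
  assume "j < card X"
  then have "{j'. j' < card X \<and> bit ((2::nat) ^ j) j'} = {j}" by (auto simp: bit_exp_iff)
  then show ?thesis by (simp add: excited_def)
qed

definition single_excitations :: "nat \<Rightarrow> nat set" where
  "single_excitations m = (\<lambda>j. 2 ^ j) ` {..<m}"

lemma mem_single_excitations: "k \<in> single_excitations m \<longleftrightarrow> (\<exists>j<m. k = 2 ^ j)"
  by (auto simp: single_excitations_def)

lemma card_single_excitations: "card (single_excitations m) = m"
  unfolding single_excitations_def by (subst card_image) (auto simp: inj_on_def)

lemma single_excitations_subset: "single_excitations m \<subseteq> {1..<2 ^ m}"
  by (auto simp: single_excitations_def)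

lemma excited_eq_empty_iff: "finite X \<Longrightarrow> k < 2 ^ card X \<Longrightarrow> excited X k = {} \<longleftrightarrow> k = 0"
  using excited_inj[of X k 0] by auto

lemma excited_eq_iff: "finite X \<Longrightarrow> k < 2 ^ card X \<Longrightarrow> excited X k = X \<longleftrightarrow> k = 2 ^ card X - 1"
  using excited_inj[of X k "2 ^ card X - 1"] excited_mask[of X] by auto

lemma excited_eq_singleton_iff:
  assumes "finite X" "k < 2 ^ card X"
  shows "(\<exists>i. excited X k = {i}) \<longleftrightarrow> k \<in> single_excitations (card X)"
proof
  assume "\<exists>i. excited X k = {i}"
  then obtain i where i: "excited X k = {i}" by blast
  then have "i \<in> X" using excited_subset[OF assms(1), of k] by blast
  then obtain j where j: "j < card X" "i = sorted_list_of_set X ! j"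
    using image_nth_sorted_list_of_set[OF assms(1)] by (metis imageE lessThan_iff)
  then have "k = 2 ^ j"
    using excited_inj[OF assms(1,2), of "2 ^ j"] i excited_exp[OF j(1)] by simp
  then show "k \<in> single_excitations (card X)" using j(1) by (auto simp: single_excitations_def)
qed (auto simp: single_excitations_def excited_exp)

section \<open>Marginals of the GHZ and W states\<close>

lemma index_marginal:
  assumes "k < 2 ^ card X" "l < 2 ^ card X"
  shows "marginal n psi X $$ (k, l) = (\<Sum>c<2 ^ card ({0..<n} - X).
      psi (embed X k + embed ({0..<n} - X) c) * cnj (psi (embed X l + embed ({0..<n} - X) c)))"
  using assms by (simp add: marginal_def Let_def)

lemma dim_marginal [simp]:
  "dim_row (marginal n psi X) = 2 ^ card X" "dim_col (marginal n psi X) = 2 ^ card X"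
  by (simp_all add: marginal_def Let_def)

lemma of_real_inverse_sqrt_mult_cnj:
  "x \<ge> 0 \<Longrightarrow> complex_of_real (1 / sqrt x) * cnj (complex_of_real (1 / sqrt x)) = complex_of_real (1 / x)"
  by (simp flip: of_real_mult)

lemma two_le_exp_card: "finite A \<Longrightarrow> A \<noteq> {} \<Longrightarrow> (2::nat) \<le> 2 ^ card A"
  using power_increasing[of 1 "card A" "2::nat"] by (simp add: Suc_le_eq card_gt_0_iff)

lemma Wst_eq: "Wst n b = (if b \<in> single_excitations n then complex_of_real (1 / sqrt (real n)) else 0)"
  by (simp add: Wst_def mem_single_excitations)

locale bipartition =
  fixes n :: nat and X :: "nat set"
  assumes subset: "X \<subseteq> {0..<n}"
begin

abbreviation Y :: "nat set" where "Y \<equiv> {0..<n} - X"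

lemma finite_X: "finite X"
  using subset finite_subset by blast

lemma bipartition_complement: "bipartition n Y"
  by unfold_locales auto

lemma complement_complement: "{0..<n} - Y = X"
  using subset by blast

lemma bits_embed_add_embed: "{p. bit (embed X k + embed Y c) p} = excited X k \<union> excited Y c"
  using bit_embed_add_embed_iff[OF finite_X] by blast

lemma embed_add_eq_0_iff:
  assumes "k < 2 ^ card X" "c < 2 ^ card Y"
  shows "embed X k + embed Y c = 0 \<longleftrightarrow> k = 0 \<and> c = 0"
proof -
  have "embed X k + embed Y c = 0 \<longleftrightarrow> excited X k \<union> excited Y c = {}"
    unfolding nat_eq_iff_bits_eq bits_embed_add_embed by (simp add: bot_fun_def)
  then show ?thesis
    using excited_eq_empty_iff[OF finite_X assms(1)] excited_eq_empty_iff[OF _ assms(2)] by auto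
qed

lemma embed_add_eq_mask_iff:
  assumes "k < 2 ^ card X" "c < 2 ^ card Y"
  shows "embed X k + embed Y c = 2 ^ n - 1 \<longleftrightarrow> k = 2 ^ card X - 1 \<and> c = 2 ^ card Y - 1"
proof -
  have "embed X k + embed Y c = 2 ^ n - 1 \<longleftrightarrow> excited X k \<union> excited Y c = X \<union> Y"
    unfolding nat_eq_iff_bits_eq bits_embed_add_embed bits_mask using subset by auto
  also have "\<dots> \<longleftrightarrow> excited X k = X \<and> excited Y c = Y"
    using excited_subset[OF finite_X, of k] excited_subset[of Y c] by auto
  finally show ?thesis
    using excited_eq_iff[OF finite_X assms(1)] excited_eq_iff[OF _ assms(2)] by auto
qed

lemma embed_add_mem_single_excitations_iff:
  assumes "k < 2 ^ card X" "c < 2 ^ card Y"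
  shows "embed X k + embed Y c \<in> single_excitations n \<longleftrightarrow>
    (k \<in> single_excitations (card X) \<and> c = 0) \<or> (k = 0 \<and> c \<in> single_excitations (card Y))"
proof -
  have E: "excited X k \<union> excited Y c \<subseteq> {0..<n}"
    using excited_subset[OF finite_X, of k] excited_subset[of Y c] subset by auto
  have "embed X k + embed Y c \<in> single_excitations n \<longleftrightarrow> (\<exists>i<n. excited X k \<union> excited Y c = {i})"
    unfolding single_excitations_def image_iff nat_eq_iff_bits_eq bits_embed_add_embed bits_exp by auto
  also have "\<dots> \<longleftrightarrow> (\<exists>i. excited X k \<union> excited Y c = {i})"
  proof
    assume "\<exists>i. excited X k \<union> excited Y c = {i}"
    then obtain i where "excited X k \<union> excited Y c = {i}" by blast
    moreover from this have "i \<in> {0..<n}" using E by blast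
    ultimately show "\<exists>i<n. excited X k \<union> excited Y c = {i}" by auto
  qed blast
  also have "\<dots> \<longleftrightarrow> ((\<exists>i. excited X k = {i}) \<and> excited Y c = {})
      \<or> (excited X k = {} \<and> (\<exists>i. excited Y c = {i}))"
    using excited_subset[OF finite_X, of k] excited_subset[of Y c] by (auto simp: Un_singleton_iff)
  finally show ?thesis
    using excited_eq_empty_iff[OF finite_X assms(1)] excited_eq_empty_iff[OF _ assms(2)]
      excited_eq_singleton_iff[OF finite_X assms(1)] excited_eq_singleton_iff[OF _ assms(2)]
    by auto
qed

lemma GHZ_embed_add_embed:
  assumes "k < 2 ^ card X" "c < 2 ^ card Y"
  shows "GHZ n (embed X k + embed Y c) =
    (if (k = 0 \<and> c = 0) \<or> (k = 2 ^ card X - 1 \<and> c = 2 ^ card Y - 1) then complex_of_real (1 / sqrt 2) else 0)"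
  unfolding GHZ_def embed_add_eq_0_iff[OF assms] embed_add_eq_mask_iff[OF assms] ..

lemma Wst_embed_add_embed:
  assumes "k < 2 ^ card X" "c < 2 ^ card Y"
  shows "Wst n (embed X k + embed Y c) =
    (if (k \<in> single_excitations (card X) \<and> c = 0) \<or> (k = 0 \<and> c \<in> single_excitations (card Y))
     then complex_of_real (1 / sqrt (real n)) else 0)"
  unfolding Wst_eq embed_add_mem_single_excitations_iff[OF assms] ..

lemma marginal_GHZ:
  assumes "X \<noteq> {}" "Y \<noteq> {}"
  shows "marginal n (GHZ n) X = mat (2 ^ card X) (2 ^ card X)
     (\<lambda>(k, l). if k = l \<and> (k = 0 \<or> k = 2 ^ card X - 1) then 1 / 2 else 0)"
proof (rule eq_matI)
  fix i j
  assume "i < dim_row (mat (2 ^ card X) (2 ^ card X)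
      (\<lambda>(k, l). if k = l \<and> (k = 0 \<or> k = 2 ^ card X - 1) then 1 / 2 else (0::complex)))"
    and "j < dim_col (mat (2 ^ card X) (2 ^ card X)
      (\<lambda>(k, l). if k = l \<and> (k = 0 \<or> k = 2 ^ card X - 1) then 1 / 2 else (0::complex)))"
  then have i: "i < 2 ^ card X" and j: "j < 2 ^ card X" by auto
  define N where "N = (2::nat) ^ card X"
  define N' where "N' = (2::nat) ^ card Y"
  have "2 \<le> N" "2 \<le> N'"
    using two_le_exp_card finite_X assms by (auto simp: N_def N'_def)
  define A where "A = (if i = 0 \<and> j = 0 then 1 / 2 else (0::complex))"
  define B where "B = (if i = N - 1 \<and> j = N - 1 then 1 / 2 else (0::complex))"
  have "GHZ n (embed X i + embed Y c) * cnj (GHZ n (embed X j + embed Y c))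
      = (if c = 0 then A else 0) + (if c = N' - 1 then B else 0)" if "c < N'" for c
    using that i j \<open>2 \<le> N'\<close> of_real_inverse_sqrt_mult_cnj[of 2]
    by (simp add: GHZ_embed_add_embed A_def B_def N_def N'_def)
  then have "marginal n (GHZ n) X $$ (i, j) = (\<Sum>c<N'. (if c = 0 then A else 0) + (if c = N' - 1 then B else 0))"
    unfolding index_marginal[OF i j] N'_def by (intro sum.cong) auto
  also have "\<dots> = A + B"
    using \<open>2 \<le> N'\<close> by (simp add: sum.distrib)
  also have "\<dots> = (if i = j \<and> (i = 0 \<or> i = N - 1) then 1 / 2 else 0)"
    using \<open>2 \<le> N\<close> by (auto simp: A_def B_def)
  finally show "marginal n (GHZ n) X $$ (i, j) = mat (2 ^ card X) (2 ^ card X)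
      (\<lambda>(k, l). if k = l \<and> (k = 0 \<or> k = 2 ^ card X - 1) then 1 / 2 else 0) $$ (i, j)"
    using i j by (simp add: N_def)
qed simp_all

lemma marginal_Wst:
  assumes "n > 0"
  shows "marginal n (Wst n) X
    = corner_block_mat (2 ^ card X) (of_nat (card Y) / of_nat n) (single_excitations (card X)) (1 / of_nat n)"
    (is "_ = ?rho")
proof (rule eq_matI)
  fix i j
  assume "i < dim_row ?rho" and "j < dim_col ?rho"
  then have i: "i < 2 ^ card X" and j: "j < 2 ^ card X" by (simp_all add: corner_block_mat_def)
  define N' where "N' = (2::nat) ^ card Y"
  define A where "A = (if i \<in> single_excitations (card X) \<and> j \<in> single_excitations (card X)
      then 1 / of_nat n else (0::complex))"
  define B where "B = (if i = 0 \<and> j = 0 then 1 / of_nat n else (0::complex))"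
  have "0 \<notin> single_excitations m" for m by (auto simp: single_excitations_def)
  then have "Wst n (embed X i + embed Y c) * cnj (Wst n (embed X j + embed Y c))
      = (if c = 0 then A else 0) + (if c \<in> single_excitations (card Y) then B else 0)" if "c < N'" for c
    using that i j of_real_inverse_sqrt_mult_cnj[of "real n"]
    by (auto simp: Wst_embed_add_embed A_def B_def N'_def)
  then have "marginal n (Wst n) X $$ (i, j)
      = (\<Sum>c<N'. (if c = 0 then A else 0) + (if c \<in> single_excitations (card Y) then B else 0))"
    unfolding index_marginal[OF i j] N'_def by (intro sum.cong) auto
  also have "\<dots> = A + of_nat (card Y) * B"
  proof -
    have "{..<N'} \<inter> single_excitations (card Y) = single_excitations (card Y)"
      using single_excitations_subset[of "card Y"] by (auto simp: N'_def)
    then show ?thesis by (simp add: sum.distrib sum.If_cases card_single_excitations N'_def)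
  qed
  finally show "marginal n (Wst n) X $$ (i, j) = ?rho $$ (i, j)"
    using i j by (auto simp: A_def B_def corner_block_mat_def)
qed (simp_all add: corner_block_mat_def)

lemma card_X_ge_1: "X \<noteq> {} \<Longrightarrow> card X \<ge> 1"
  using finite_X by (simp add: Suc_le_eq card_gt_0_iff)

lemma passive_energy_marginal_GHZ:
  assumes "X \<noteq> {}" "Y \<noteq> {}"
  shows "passive_energy (marginal n (GHZ n) X) (hamX X) = 1 / 2"
proof -
  define N where "N = (2::nat) ^ card X"
  have "2 \<le> N" using two_le_exp_card finite_X assms(1) by (simp add: N_def)
  define D where "D = mat N N (\<lambda>(k, l). if k = l \<and> (k = 0 \<or> k = N - 1) then 1 / 2 else (0::complex))"
  have "eigs (marginal n (GHZ n) X) = mset (map (\<lambda>i. Re (D $$ (i, i))) [0..<N])"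
    unfolding marginal_GHZ[OF assms] N_def[symmetric] D_def[symmetric]
    by (intro eigs_upper_triangular) (auto simp: D_def upper_triangular_def)
  also have "\<dots> = add_mset (1 / 2) (add_mset (1 / 2) (replicate_mset (N - 2) 0))"
    using \<open>2 \<le> N\<close> by (subst mset_map_upt_two_nonzero[of 0 N "N - 1"]) (auto simp: D_def)
  finally have "passive_energy (marginal n (GHZ n) X) (hamX X) = min (1 / 2) (1 / 2)"
    using card_X_ge_1[OF assms(1)] by (intro passive_energy_two_eigenvalues) (simp_all add: N_def)
  then show ?thesis by simp
qed

lemma passive_energy_marginal_Wst:
  assumes "n > 0" "X \<noteq> {}"
  shows "passive_energy (marginal n (Wst n) X) (hamX X) = min (card Y / n) (card X / n)"
proof -
  define N where "N = (2::nat) ^ card X"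
  define S where "S = single_excitations (card X)"
  have "S \<subseteq> {1..<N}" using single_excitations_subset by (simp add: S_def N_def)
  moreover have "1 \<in> S"
    using card_X_ge_1[OF assms(2)] by (auto simp: S_def mem_single_excitations intro!: exI[of _ 0])
  ultimately have "eigs (marginal n (Wst n) X)
      = mset (map (\<lambda>i. Re (if i = 0 then of_nat (card Y) / of_nat n
          else if i = 1 then of_nat (card S) * (1 / of_nat n) else 0)) [0..<N])"
    unfolding marginal_Wst[OF assms(1)] N_def[symmetric] S_def[symmetric] by (rule eigs_corner_block_mat)
  also have "\<dots> = add_mset (card Y / n) (add_mset (card X / n) (replicate_mset (N - 2) 0))"
    using \<open>S \<subseteq> {1..<N}\<close> \<open>1 \<in> S\<close>
    by (subst mset_map_upt_two_nonzero[of 0 N 1]) (auto simp: S_def card_single_excitations)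
  finally show ?thesis
    using card_X_ge_1[OF assms(2)] by (intro passive_energy_two_eigenvalues) (simp_all add: N_def)
qed

end

section \<open>Summing over all cuts\<close>

lemma Delta_GHZ:
  assumes "X \<subseteq> {0..<n}"
  shows "Delta n (GHZ n) X = (if X = {} \<or> X = {0..<n} then 0 else 1)"
proof (cases "X = {} \<or> X = {0..<n}")
  case False
  interpret bipartition n X by unfold_locales (rule assms)
  interpret complement: bipartition n "{0..<n} - X" by (rule bipartition_complement)
  have "{0..<n} - X \<noteq> {}" using False assms by blast
  then show ?thesis
    using False passive_energy_marginal_GHZ complement.passive_energy_marginal_GHZ
    by (simp add: Delta_def complement_complement)
qed (auto simp: Delta_def)

lemma Delta_Wst:
  assumes "X \<subseteq> {0..<n}" "n > 0"
  shows "Delta n (Wst n) X = 2 * min (card X) (n - card X) / n"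
proof (cases "X = {} \<or> X = {0..<n}")
  case False
  interpret bipartition n X by unfold_locales (rule assms)
  interpret complement: bipartition n "{0..<n} - X" by (rule bipartition_complement)
  have "{0..<n} - X \<noteq> {}" using False assms by blast
  moreover have "card ({0..<n} - X) = n - card X" using assms finite_X by (simp add: card_Diff_subset)
  ultimately show ?thesis
    using False passive_energy_marginal_Wst[OF assms(2)] complement.passive_energy_marginal_Wst[OF assms(2)]
    by (simp add: Delta_def complement_complement min_def divide_simps)
qed (auto simp: Delta_def)

lemma sum_Pow_card:
  assumes "finite A"
  shows "(\<Sum>X\<in>Pow A. g (card X)) = (\<Sum>k\<le>card A. real (card A choose k) * g k)"
proof -
  have "(\<Sum>X\<in>Pow A. g (card X)) = (\<Sum>k\<le>card A. \<Sum>X\<in>{X. X \<in> Pow A \<and> card X = k}. g (card X))"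
    using assms by (intro sum.group[symmetric]) (auto simp: card_mono)
  also have "\<dots> = (\<Sum>k\<le>card A. real (card A choose k) * g k)"
  proof (rule sum.cong)
    fix k
    have "(\<Sum>X\<in>{X. X \<in> Pow A \<and> card X = k}. g (card X)) = (\<Sum>X\<in>{X. X \<subseteq> A \<and> card X = k}. g k)"
      by (intro sum.cong) auto
    then show "(\<Sum>X\<in>{X. X \<in> Pow A \<and> card X = k}. g (card X)) = real (card A choose k) * g k"
      using n_subsets[OF assms, of k] by simp
  qed simp
  finally show ?thesis .
qed

lemma sum_choose_mult_lower_half:
  "(\<Sum>k\<le>Suc N. if 2 * k \<le> Suc N then (Suc N choose k) * k else 0)
    = Suc N * (\<Sum>j\<le>N. if 2 * j < N then N choose j else 0)"
proof -
  have "(\<Sum>k\<le>Suc N. if 2 * k \<le> Suc N then (Suc N choose k) * k else 0)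
      = (\<Sum>j\<le>N. if 2 * Suc j \<le> Suc N then (Suc N choose Suc j) * Suc j else 0)"
    by (subst sum.atMost_Suc_shift) simp
  also have "\<dots> = (\<Sum>j\<le>N. Suc N * (if 2 * j < N then N choose j else 0))"
    using Suc_times_binomial by (intro sum.cong) (auto simp: mult.commute)
  finally show ?thesis by (simp add: sum_distrib_left)
qed

lemma sum_choose_mult_upper_half:
  "(\<Sum>k\<le>Suc N. if Suc N < 2 * k then (Suc N choose k) * (Suc N - k) else 0)
    = Suc N * (\<Sum>j\<le>N. if Suc N < 2 * j then N choose j else 0)"
proof -
  have "(\<Sum>k\<le>Suc N. if Suc N < 2 * k then (Suc N choose k) * (Suc N - k) else 0)
      = (\<Sum>k\<le>N. if Suc N < 2 * k then (Suc N choose k) * (Suc N - k) else 0)"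
    by simp
  also have "\<dots> = (\<Sum>k\<le>N. Suc N * (if Suc N < 2 * k then N choose k else 0))"
    using binomial_absorb_comp[of "Suc N"] by (intro sum.cong) (auto simp: mult.commute)
  finally show ?thesis by (simp add: sum_distrib_left)
qed

text \<open>Absorption \<open>k \<cdot> C(N+1,k) = (N+1) \<cdot> C(N,k-1)\<close> on each half leaves exactly the
  middle term of row \<open>N\<close> uncovered.\<close>

lemma sum_choose_mult_min:
  "(\<Sum>k\<le>Suc N. (Suc N choose k) * min k (Suc N - k)) + Suc N * (N choose (N div 2)) = Suc N * 2 ^ N"
proof -
  define low where "low = (\<Sum>j\<le>N. if 2 * j < N then N choose j else 0)"
  define high where "high = (\<Sum>j\<le>N. if Suc N < 2 * j then N choose j else 0)"
  define mid where "mid = (\<Sum>j\<le>N. if j = Suc N div 2 then N choose j else 0)"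
  have "(\<Sum>k\<le>Suc N. (Suc N choose k) * min k (Suc N - k))
      = (\<Sum>k\<le>Suc N. (if 2 * k \<le> Suc N then (Suc N choose k) * k else 0)
          + (if Suc N < 2 * k then (Suc N choose k) * (Suc N - k) else 0))"
    by (intro sum.cong) (auto simp: min_def)
  also have "\<dots> = Suc N * low + Suc N * high"
    unfolding sum.distrib sum_choose_mult_lower_half sum_choose_mult_upper_half low_def high_def ..
  finally have "(\<Sum>k\<le>Suc N. (Suc N choose k) * min k (Suc N - k)) = Suc N * (low + high)"
    by (simp add: algebra_simps)
  moreover have "low + high + mid = 2 ^ N"
    unfolding low_def high_def mid_def sum.distrib[symmetric] choose_row_sum[symmetric]
    by (intro sum.cong) auto
  moreover have "mid = N choose (N div 2)"
  proof -
    have "mid = N choose (Suc N div 2)" by (simp add: mid_def)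
    also have "\<dots> = N choose (N - Suc N div 2)" by (intro binomial_symmetric) simp
    also have "N - Suc N div 2 = N div 2" by simp
    finally show ?thesis .
  qed
  ultimately show ?thesis by (metis add_mult_distrib2)
qed

lemma ME_GHZ:
  assumes "n \<ge> 1"
  shows "ME n (GHZ n) {0..<n} = 1 - 1 / 2 ^ (n - 1)"
proof -
  have "(\<Sum>X\<in>Pow {0..<n}. Delta n (GHZ n) X)
      = (\<Sum>X\<in>Pow {0..<n}. 1 - (if X = {} then 1 else 0) - (if X = {0..<n} then 1 else 0))"
    using assms by (intro sum.cong) (auto simp: Delta_GHZ)
  also have "\<dots> = 2 ^ n - 2"
    by (simp add: sum_subtractf card_Pow)
  finally have "(\<Sum>X\<in>Pow {0..<n}. Delta n (GHZ n) X) = 2 ^ n - 2" .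
  moreover obtain N where "n = Suc N" using assms by (cases n) auto
  ultimately show ?thesis by (simp add: ME_def field_simps)
qed

lemma ME_Wst:
  assumes "n \<ge> 1"
  shows "ME n (Wst n) {0..<n} = 1 - real ((n - 1) choose ((n - 1) div 2)) / 2 ^ (n - 1)"
proof -
  obtain N where N: "n = Suc N" using assms by (cases n) auto
  define C where "C = real (N choose (N div 2))"
  have "real (\<Sum>k\<le>n. (n choose k) * min k (n - k)) = n * 2 ^ N - n * C"
    using arg_cong[OF sum_choose_mult_min[of N], of real] unfolding N C_def by (simp add: algebra_simps)
  have "(\<Sum>X\<in>Pow {0..<n}. Delta n (Wst n) X) = (\<Sum>X\<in>Pow {0..<n}. 2 * min (card X) (n - card X) / n)"
    using assms by (intro sum.cong) (auto simp: Delta_Wst)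
  also have "\<dots> = (\<Sum>k\<le>n. real (n choose k) * (2 * min k (n - k) / n))"
    using sum_Pow_card[of "{0..<n}" "\<lambda>k. 2 * min k (n - k) / n"] by simp
  also have "\<dots> = 2 / n * real (\<Sum>k\<le>n. (n choose k) * min k (n - k))"
    unfolding of_nat_sum sum_distrib_left by (intro sum.cong) auto
  also have "\<dots> = 2 * (2 ^ N - C)"
    unfolding \<open>real (\<Sum>k\<le>n. _) = _\<close> using assms by (simp add: field_simps)
  finally show ?thesis by (simp add: ME_def N C_def field_simps)
qed

lemma one_less_choose_half:
  assumes "N \<ge> 2"
  shows "1 < N choose (N div 2)"
proof -
  have "0 < N div 2" "N div 2 < N" using assms by auto
  then have "N choose (N div 2) = (N - 1 choose (N div 2 - 1)) + (N - 1 choose (N div 2))"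
    by (intro choose_reduce_nat) auto
  moreover have "0 < N - 1 choose (N div 2 - 1)" "0 < N - 1 choose (N div 2)"
    using \<open>N div 2 < N\<close> by (auto intro!: zero_less_binomial)
  ultimately show ?thesis by linarith
qed

theorem mainTheorem7:
  fixes n :: nat
  assumes "n \<ge> 3"
  shows "ME n (GHZ n) {0..<n} = 1 - 1 / 2 ^ (n - 1)
    \<and> ME n (Wst n) {0..<n} = 1 - real ((n - 1) choose nat \<lfloor>real (n - 1) / 2\<rfloor>) / 2 ^ (n - 1)
    \<and> ME n (GHZ n) {0..<n} > ME n (Wst n) {0..<n}"
proof -
  have "nat \<lfloor>real (n - 1) / 2\<rfloor> = (n - 1) div 2"
    using floor_divide_of_nat_eq[of "n - 1" 2, where 'a = real] by simp
  moreover have "1 < real ((n - 1) choose ((n - 1) div 2))"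
    using one_less_choose_half[of "n - 1"] assms by simp
  ultimately show ?thesis
    using ME_GHZ[of n] ME_Wst[of n] assms by (simp add: divide_strict_right_mono)
qed

end
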